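(* Let $\mathcal N$ be a finite ground set, $f:2^{\mathcal N}\to\mathbb R$ monotone and submodular, and $k\ge1$ an integer. Consider the algorithm: initialize $A\leftarrow\emptyset$; for each $u\in\mathcal N$ in turn, if $\Delta(u\mid A)\ge f(A)/k$ then $A\leftarrow A\cup\{u\}$; finally let $A'$ be the set of the last $k$ elements added to $A$ (or $A'=A$ if $|A|<k$). At termination of this algorithm, $f(A)\le2f(A')$.
   Context: $f$ is submodular if $f(T\cup\{x\})-f(T)\le f(S\cup\{x\})-f(S)$ for all $S\subseteq T\subseteq\mathcal N$, $x\notin T$; monotone if $f(S)\le f(T)$ for $S\subseteq T$. $\Delta(x\mid S)=f(S\cup\{x\})-f(S)$. *)

theory Defs
  imports Complex_Main
begin

definition monotone_set_fn :: "'a set \<Rightarrow> ('a set \<Rightarrow> real) \<Rightarrow> bool" where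
  "monotone_set_fn N f \<longleftrightarrow> (\<forall>S T. S \<subseteq> T \<longrightarrow> T \<subseteq> N \<longrightarrow> f S \<le> f T)"

definition submodular :: "'a set \<Rightarrow> ('a set \<Rightarrow> real) \<Rightarrow> bool" where
  "submodular N f \<longleftrightarrow> (\<forall>S T x. S \<subseteq> T \<longrightarrow> T \<subseteq> N \<longrightarrow> x \<in> N \<longrightarrow> x \<notin> T \<longrightarrow>
      f (T \<union> {x}) - f T \<le> f (S \<union> {x}) - f S)"

definition marginal :: "('a set \<Rightarrow> real) \<Rightarrow> 'a \<Rightarrow> 'a set \<Rightarrow> real" where
  "marginal f x S = f (S \<union> {x}) - f S"

text \<open>One step of the algorithm; the current set A is kept as the list of added elements,
  in order of addition.\<close>
definition alg_step :: "('a set \<Rightarrow> real) \<Rightarrow> nat \<Rightarrow> 'a list \<Rightarrow> 'a \<Rightarrow> 'a list" where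
  "alg_step f k L u = (if marginal f u (set L) \<ge> f (set L) / real k then L @ [u] else L)"

definition alg_run :: "('a set \<Rightarrow> real) \<Rightarrow> nat \<Rightarrow> 'a list \<Rightarrow> 'a list" where
  "alg_run f k us = foldl (alg_step f k) [] us"

definition last_k :: "nat \<Rightarrow> 'a list \<Rightarrow> 'a list" where
  "last_k k L = drop (length L - k) L"

end

theory Submission
  imports Defs
begin

text \<open>Split the output A of the algorithm as B followed by the last k additions C.
  Every element of C passed the threshold against a superset of B, so by monotonicity
  adding C gains at least k \<cdot> f(B)/k = f(B), i.e. f(A) - f(B) \<ge> f(B).
  By submodularity that gain is at most f(C) - f(\<emptyset>) \<le> f(C).
  Hence f(A) \<le> 2 (f(A) - f(B)) \<le> 2 f(C).\<close>

definition above_threshold :: "('a set \<Rightarrow> real) \<Rightarrow> nat \<Rightarrow> 'a list \<Rightarrow> bool" where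
  "above_threshold f k L \<longleftrightarrow>
     (\<forall>i<length L. f (set (take i L)) / real k \<le> marginal f (L ! i) (set (take i L)))"

lemma above_threshold_Nil [simp]: "above_threshold f k []"
  by (simp add: above_threshold_def)

lemma above_threshold_snoc [simp]:
  "above_threshold f k (L @ [x]) \<longleftrightarrow>
     above_threshold f k L \<and> f (set L) / real k \<le> marginal f x (set L)"
  by (auto simp: above_threshold_def nth_append less_Suc_eq)

lemma alg_run_Nil [simp]: "alg_run f k [] = []"
  by (simp add: alg_run_def)

lemma alg_run_snoc [simp]: "alg_run f k (xs @ [x]) = alg_step f k (alg_run f k xs) x"
  by (simp add: alg_run_def)

lemma set_alg_run_subset: "set (alg_run f k us) \<subseteq> set us"
  by (induction us rule: rev_induct) (auto simp: alg_step_def)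

lemma distinct_alg_run: "distinct us \<Longrightarrow> distinct (alg_run f k us)"
  using set_alg_run_subset
  by (induction us rule: rev_induct) (fastforce simp: alg_step_def)+

lemma above_threshold_alg_run: "above_threshold f k (alg_run f k us)"
  by (induction us rule: rev_induct) (simp_all add: alg_step_def)

lemma submodular_diminishing_returns:
  assumes "submodular N f" and "S \<subseteq> T" and "T \<union> C \<subseteq> N" and "finite C" and "C \<inter> T = {}"
  shows "f (T \<union> C) - f T \<le> f (S \<union> C) - f S"
  using assms(4,3,5)
proof (induction C rule: finite_induct)
  case empty
  then show ?case by simp
next
  case (insert x C)
  have "S \<union> C \<subseteq> T \<union> C" "T \<union> C \<subseteq> N" "x \<in> N" "x \<notin> T \<union> C"
    using assms(2) insert by auto
  then have "f (T \<union> C \<union> {x}) - f (T \<union> C) \<le> f (S \<union> C \<union> {x}) - f (S \<union> C)"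
    using assms(1) unfolding submodular_def by blast
  then show ?case
    using insert by (simp add: insert_commute)
qed

lemma above_threshold_gain:
  assumes mono: "monotone_set_fn N f" and "set (B @ C) \<subseteq> N"
    and "above_threshold f k (B @ C)"
  shows "real (length C) * f (set B) / real k \<le> f (set (B @ C)) - f (set B)"
  using assms(2,3)
proof (induction C rule: rev_induct)
  case Nil
  then show ?case by simp
next
  case (snoc c C)
  have "f (set B) \<le> f (set (B @ C))"
    using mono snoc.prems unfolding monotone_set_fn_def by auto
  then have "f (set B) / real k \<le> f (set (B @ C)) / real k"
    by (simp add: divide_right_mono)
  also have "\<dots> \<le> f (set (B @ C) \<union> {c}) - f (set (B @ C))"
    using snoc.prems(2) by (simp flip: append_assoc add: marginal_def)
  finally show ?case
    using snoc by (simp flip: append_assoc add: add_divide_distrib distrib_right Un_commute)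
qed

theorem lemma10:
  fixes N :: "'a set" and f :: "'a set \<Rightarrow> real" and k :: nat and us :: "'a list"
  assumes "finite N"
    and "monotone_set_fn N f"
    and "submodular N f"
    and "\<forall>S. S \<subseteq> N \<longrightarrow> f S \<ge> 0"
    and "k \<ge> 1"
    and "distinct us" and "set us = N"
  shows "f (set (alg_run f k us)) \<le> 2 * f (set (last_k k (alg_run f k us)))"
proof -
  define A where "A = alg_run f k us"
  have A_N: "set A \<subseteq> N" using set_alg_run_subset[of f k us] assms(7) by (simp add: A_def)
  show ?thesis
  proof (cases "length A \<le> k")
    case True
    then show ?thesis using assms(4) A_N by (simp add: A_def last_k_def)
  next
    case False
    define B where "B = take (length A - k) A"
    define C where "C = last_k k A"
    have A_BC: "A = B @ C" by (simp add: B_def C_def last_k_def)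
    have "length C = k" using False by (simp add: C_def last_k_def)
    moreover have "above_threshold f k (B @ C)"
      using above_threshold_alg_run[of f k us] by (simp flip: A_BC add: A_def)
    ultimately have "f (set B) \<le> f (set A) - f (set B)"
      using above_threshold_gain[OF assms(2), of B C k] A_N assms(5) by (simp flip: A_BC)
    moreover have "f (set A) - f (set B) \<le> f (set C) - f {}"
      using submodular_diminishing_returns[OF assms(3), of "{}" "set B" "set C"]
        distinct_alg_run[OF assms(6), of f k] A_N by (simp add: A_BC Int_commute flip: A_def)
    ultimately show ?thesis using assms(4) by (force simp: A_def C_def)
  qed
qed

end
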